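(* Let $(G,u)$ be a countable unperforated partially ordered abelian group with order unit $u$. Then $\{\tau\in S(G,u):\ker\tau=\mathrm{Inf}(G)\}$ is a dense $G_\delta$ subset of $S(G,u)$.
   Context: $u$ is an order unit: for every $g\in G$ there is $n\in\mathbb Z^+$ with $nu-g\ge0$. Unperforated: $ng\ge0$ for some $n\in\mathbb N$ implies $g\ge0$. A state is a homomorphism $\tau:G\to\mathbb R$ with $\tau(G^+)\ge0$ and $\tau(u)=1$; $S(G,u)$ is the set of states with the topology of pointwise convergence (a compact convex subset of $\mathbb R^G$). $\mathrm{Inf}(G)=\{g\in G:-\epsilon u\le g\le\epsilon u\text{ for all rational }\epsilon>0\}$. *)

theory Defs
  imports "HOL-Analysis.Analysis"
begin

primrec natmul :: "nat \<Rightarrow> 'a::ab_group_add \<Rightarrow> 'a" where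
  "natmul 0 g = 0"
| "natmul (Suc n) g = g + natmul n g"

definition order_unit :: "'a::ordered_ab_group_add \<Rightarrow> bool" where
  "order_unit u \<longleftrightarrow> (\<forall>g. \<exists>n::nat. n > 0 \<and> natmul n u - g \<ge> 0)"

definition unperforated :: "'a::ordered_ab_group_add itself \<Rightarrow> bool" where
  "unperforated _ \<longleftrightarrow> (\<forall>(g::'a) (n::nat). n > 0 \<and> natmul n g \<ge> 0 \<longrightarrow> g \<ge> 0)"

definition states :: "'a::ordered_ab_group_add \<Rightarrow> ('a \<Rightarrow> real) set" where
  "states u = {\<tau>. (\<forall>x y. \<tau> (x + y) = \<tau> x + \<tau> y) \<and> (\<forall>g. 0 \<le> g \<longrightarrow> 0 \<le> \<tau> g) \<and> \<tau> u = 1}"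

text \<open>Infinitesimals: -\<epsilon>u \<le> g \<le> \<epsilon>u for all rational \<epsilon> = p/q > 0,
  i.e. -(p u) \<le> q g \<le> p u for all positive integers p, q.\<close>
definition infinitesimals :: "'a::ordered_ab_group_add \<Rightarrow> 'a set" where
  "infinitesimals u = {g. \<forall>p q::nat. p > 0 \<and> q > 0 \<longrightarrow>
      - natmul p u \<le> natmul q g \<and> natmul q g \<le> natmul p u}"

end

theory Submission
  imports Defs
begin

text \<open>Every state kills the infinitesimals, so the states with kernel exactly Inf(G) are those
  that do not vanish at any of the countably many non-infinitesimals g; each such condition is
  open. It is also dense: S(G,u) is convex, so it suffices to find one state with \<tau> g \<noteq> 0. For
  this take the sublinear gauge p(x) = inf {r \<in> \<rat> : x \<le> r u}. By unperforation,
  p(g) \<le> 0 \<and> p(-g) \<le> 0 would make g infinitesimal, so p(w) > 0 for w = g or w = -g, and a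
  countable Hahn-Banach argument (making p additive along an enumeration of G, one element at a
  time) gives an additive \<tau> \<le> p with \<tau> w = p w; being dominated by p, \<tau> is a state. Since
  S(G,u) is compact Hausdorff, the Baire category theorem finishes the proof.\<close>

lemma natmul_add_nat: "natmul (m + n) g = natmul m g + natmul n (g::'a::ab_group_add)"
  by (induction m) (simp_all add: add.assoc)

lemma natmul_add: "natmul n (a + b) = natmul n a + natmul n (b::'a::ab_group_add)"
  by (induction n) (simp_all add: algebra_simps)

lemma natmul_zero [simp]: "natmul n (0::'a::ab_group_add) = 0"
  by (induction n) simp_all

lemma natmul_minus: "natmul n (- a) = - natmul n (a::'a::ab_group_add)"
  by (induction n) (simp_all add: algebra_simps)

lemma natmul_diff: "natmul n (a - b) = natmul n a - natmul n (b::'a::ab_group_add)"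
  by (simp only: diff_conv_add_uminus natmul_add natmul_minus)

lemma natmul_mult: "natmul (m * n) g = natmul m (natmul n (g::'a::ab_group_add))"
  by (induction m) (simp_all add: natmul_add_nat)

lemma natmul_commute: "natmul m (natmul n g) = natmul n (natmul m (g::'a::ab_group_add))"
  by (simp only: natmul_mult[symmetric] mult.commute)

lemma natmul_mono: "a \<le> b \<Longrightarrow> natmul n a \<le> natmul n (b::'a::ordered_ab_group_add)"
  by (induction n) (simp_all add: add_mono)

lemma natmul_mono_nat:
  assumes "0 \<le> a" "m \<le> n"
  shows "natmul m a \<le> natmul n (a::'a::ordered_ab_group_add)"
proof -
  obtain k where "n = k + m" using \<open>m \<le> n\<close> le_add_diff_inverse2 by metis
  with natmul_mono[OF \<open>0 \<le> a\<close>, of k] show ?thesis by (simp add: natmul_add_nat)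
qed

lemma additive_natmul: "Modules.additive f \<Longrightarrow> f (natmul n g) = real n * f g"
  by (induction n) (simp_all add: additive.add additive.zero algebra_simps)

definition sublinear :: "('a::ab_group_add \<Rightarrow> real) \<Rightarrow> bool" where
  "sublinear q \<longleftrightarrow> (\<forall>x y. q (x + y) \<le> q x + q y) \<and> (\<forall>n x. q (natmul n x) = real n * q x)"

lemma sublinear_add: "sublinear q \<Longrightarrow> q (x + y) \<le> q x + q y"
  by (simp add: sublinear_def)

lemma sublinear_natmul: "sublinear q \<Longrightarrow> q (natmul n x) = real n * q x"
  by (simp add: sublinear_def)

lemma sublinear_zero: "sublinear q \<Longrightarrow> q 0 = 0"
  using sublinear_natmul[of q 0 0] by simp

lemma sublinear_minus_ge: "sublinear q \<Longrightarrow> - q x \<le> q (- x)"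
  using sublinear_add[of q x "- x"] sublinear_zero[of q] by simp

text \<open>For additive \<sigma> \<le> q with \<sigma> x = q x we have m \<sigma>(y) + t q(x) = \<sigma>(m y + t x) \<le> q(m y + t x),
  so every quotient bounds \<sigma>(y) from above; straighten q x is the best such bound.\<close>
definition straighten_quot :: "('a::ab_group_add \<Rightarrow> real) \<Rightarrow> 'a \<Rightarrow> 'a \<Rightarrow> nat \<Rightarrow> nat \<Rightarrow> real" where
  "straighten_quot q x y m t = (q (natmul m y + natmul t x) - real t * q x) / real m"

definition straighten :: "('a::ab_group_add \<Rightarrow> real) \<Rightarrow> 'a \<Rightarrow> 'a \<Rightarrow> real" where
  "straighten q x y = Inf {straighten_quot q x y m t | m t. 0 < m}"

lemma straighten_quot_ge:
  assumes q: "sublinear q" and m: "0 < m"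
  shows "- q (- y) \<le> straighten_quot q x y m t"
proof -
  have "natmul t x = (natmul m y + natmul t x) + natmul m (- y)"
    by (simp add: natmul_minus)
  then have "q (natmul t x) \<le> q (natmul m y + natmul t x) + q (natmul m (- y))"
    using sublinear_add[OF q] by metis
  then have "real t * q x \<le> q (natmul m y + natmul t x) + real m * q (- y)"
    by (simp add: sublinear_natmul[OF q])
  with m show ?thesis
    by (simp add: straighten_quot_def pos_le_divide_eq algebra_simps)
qed

lemma straighten_le_quot:
  assumes "sublinear q" "0 < m"
  shows "straighten q x y \<le> straighten_quot q x y m t"
  unfolding straighten_def
proof (rule cInf_lower)
  show "bdd_below {straighten_quot q x y m t | m t. 0 < m}"
    using straighten_quot_ge[OF assms(1)] unfolding bdd_below_def by blast
qed (use assms in blast)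

lemma straighten_greatest:
  "(\<And>m t. 0 < m \<Longrightarrow> c \<le> straighten_quot q x y m t) \<Longrightarrow> c \<le> straighten q x y"
  unfolding straighten_def by (rule cInf_greatest) auto

lemma straighten_ge: "sublinear q \<Longrightarrow> - q (- y) \<le> straighten q x y"
  by (rule straighten_greatest) (rule straighten_quot_ge)

lemma straighten_le: "sublinear q \<Longrightarrow> straighten q x y \<le> q y"
  using straighten_le_quot[of q 1 x y 0] by (simp add: straighten_quot_def)

lemma straighten_minus_le: "sublinear q \<Longrightarrow> straighten q x (- x) \<le> - q x"
  using straighten_le_quot[of q 1 x "- x" 1] by (simp add: straighten_quot_def sublinear_zero)

lemma straighten_add_le_quot:
  assumes q: "sublinear q" and m1: "0 < m1" and m2: "0 < m2"
  shows "straighten q x (y1 + y2) \<le> straighten_quot q x y1 m1 t1 + straighten_quot q x y2 m2 t2"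
proof -
  let ?a1 = "natmul m1 y1 + natmul t1 x" and ?a2 = "natmul m2 y2 + natmul t2 x"
  have "natmul (m1 * m2) (y1 + y2) + natmul (t1 * m2 + t2 * m1) x = natmul m2 ?a1 + natmul m1 ?a2"
    by (simp add: natmul_add natmul_add_nat natmul_mult natmul_commute[of m1 m2] algebra_simps)
  then have "q (natmul (m1 * m2) (y1 + y2) + natmul (t1 * m2 + t2 * m1) x)
      \<le> real m2 * q ?a1 + real m1 * q ?a2"
    using sublinear_add[OF q, of "natmul m2 ?a1" "natmul m1 ?a2"] by (simp add: sublinear_natmul[OF q])
  then have "straighten_quot q x (y1 + y2) (m1 * m2) (t1 * m2 + t2 * m1)
      \<le> straighten_quot q x y1 m1 t1 + straighten_quot q x y2 m2 t2"
    using m1 m2 by (simp add: straighten_quot_def field_simps)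
  moreover have "straighten q x (y1 + y2) \<le> straighten_quot q x (y1 + y2) (m1 * m2) (t1 * m2 + t2 * m1)"
    using straighten_le_quot[OF q] m1 m2 by simp
  ultimately show ?thesis by linarith
qed

lemma straighten_add:
  assumes q: "sublinear q"
  shows "straighten q x (y1 + y2) \<le> straighten q x y1 + straighten q x y2"
proof -
  have "straighten q x (y1 + y2) - straighten_quot q x y2 m2 t2 \<le> straighten q x y1"
    if "0 < m2" for m2 t2
    using straighten_add_le_quot[OF q _ that]
    by (intro straighten_greatest) (simp add: algebra_simps)
  then have "straighten q x (y1 + y2) - straighten q x y1 \<le> straighten q x y2"
    by (intro straighten_greatest) (simp add: algebra_simps)
  then show ?thesis by linarith
qed

lemma straighten_natmul:
  assumes q: "sublinear q"
  shows "straighten q x (natmul n y) = real n * straighten q x y"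
proof (cases "n = 0")
  case True
  then show ?thesis
    using straighten_le[OF q, of x 0] straighten_ge[OF q, of 0 x] by (simp add: sublinear_zero[OF q])
next
  case False
  then have n: "0 < n" by simp
  have "straighten q x (natmul n y) / real n \<le> straighten q x y"
  proof (rule straighten_greatest)
    fix m t :: nat assume m: "0 < m"
    have "natmul m (natmul n y) + natmul (n * t) x = natmul n (natmul m y + natmul t x)"
      by (simp add: natmul_add natmul_mult natmul_commute[of m n])
    then have "straighten_quot q x (natmul n y) m (n * t) = real n * straighten_quot q x y m t"
      by (simp add: straighten_quot_def sublinear_natmul[OF q] algebra_simps)
    with straighten_le_quot[OF q m, of x "natmul n y" "n * t"] n
    show "straighten q x (natmul n y) / real n \<le> straighten_quot q x y m t"
      by (simp add: divide_le_eq mult.commute)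
  qed
  moreover have "real n * straighten q x y \<le> straighten q x (natmul n y)"
  proof (rule straighten_greatest)
    fix m t :: nat assume m: "0 < m"
    have "straighten q x y \<le> straighten_quot q x y (m * n) t"
      using straighten_le_quot[OF q] m n by simp
    also have "\<dots> = straighten_quot q x (natmul n y) m t / real n"
      by (simp add: straighten_quot_def natmul_mult)
    finally show "real n * straighten q x y \<le> straighten_quot q x (natmul n y) m t"
      using n by (simp add: le_divide_eq mult.commute)
  qed
  ultimately show ?thesis using n by (simp add: divide_le_eq mult.commute)
qed

lemma sublinear_straighten: "sublinear q \<Longrightarrow> sublinear (straighten q x)"
  by (simp add: sublinear_def straighten_add straighten_natmul)

primrec straighten_seq :: "('a::ab_group_add \<Rightarrow> real) \<Rightarrow> (nat \<Rightarrow> 'a) \<Rightarrow> nat \<Rightarrow> 'a \<Rightarrow> real" where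
  "straighten_seq q xs 0 = q"
| "straighten_seq q xs (Suc n) = straighten (straighten_seq q xs n) (xs n)"

lemma sublinear_straighten_seq: "sublinear q \<Longrightarrow> sublinear (straighten_seq q xs n)"
  by (induction n) (simp_all add: sublinear_straighten)

lemma straighten_seq_antimono:
  assumes q: "sublinear q" and "m \<le> n"
  shows "straighten_seq q xs n y \<le> straighten_seq q xs m y"
  using \<open>m \<le> n\<close>
proof (induction n rule: dec_induct)
  case (step n)
  then show ?case using straighten_le[OF sublinear_straighten_seq[OF q], of xs n "xs n" y] by simp
qed simp

lemma straighten_seq_ge: "sublinear q \<Longrightarrow> - q (- y) \<le> straighten_seq q xs n y"
  using sublinear_minus_ge[OF sublinear_straighten_seq, of q xs n "- y"]
    straighten_seq_antimono[of q 0 n xs "- y"] by simp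

lemma INF_add_le_of_antimono:
  fixes Q :: "nat \<Rightarrow> 'a::plus \<Rightarrow> real"
  assumes sub: "\<And>n a b. Q n (a + b) \<le> Q n a + Q n b"
    and antimono: "\<And>m n y. m \<le> n \<Longrightarrow> Q n y \<le> Q m y"
    and bdd: "\<And>y. bdd_below (range (\<lambda>n. Q n y))"
  shows "(INF n. Q n (a + b)) \<le> (INF n. Q n a) + (INF n. Q n b)"
proof -
  have "(INF n. Q n (a + b)) \<le> Q n1 a + Q n2 b" for n1 n2
  proof -
    have "(INF n. Q n (a + b)) \<le> Q (max n1 n2) (a + b)"
      by (rule cINF_lower[OF bdd]) simp
    also have "\<dots> \<le> Q (max n1 n2) a + Q (max n1 n2) b" by (rule sub)
    also have "\<dots> \<le> Q n1 a + Q n2 b" by (intro add_mono antimono) simp_all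
    finally show ?thesis .
  qed
  then have "(INF n. Q n (a + b)) - Q n2 b \<le> (INF n. Q n a)" for n2
    by (intro cINF_greatest) (simp_all add: algebra_simps)
  then have "(INF n. Q n (a + b)) - (INF n. Q n a) \<le> (INF n. Q n b)"
    by (intro cINF_greatest) (simp_all add: algebra_simps)
  then show ?thesis by simp
qed

lemma additive_if_subadditive_antisym:
  fixes f :: "'a::ab_group_add \<Rightarrow> real"
  assumes sub: "\<And>a b. f (a + b) \<le> f a + f b" and antisym: "\<And>z. f z + f (- z) \<le> 0"
  shows "Modules.additive f"
proof
  have "f 0 = 0" using sub[of 0 0] antisym[of 0] by simp
  then have minus: "f (- z) = - f z" for z
    using sub[of z "- z"] antisym[of z] by simp
  fix a b
  show "f (a + b) = f a + f b"
    using sub[of a b] sub[of "- a" "- b"] minus[of "a + b"] minus[of a] minus[of b]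
    by (simp add: add.commute)
qed

theorem countable_sublinear_extension:
  fixes q :: "'a::ab_group_add \<Rightarrow> real"
  assumes q: "sublinear q" and countable: "countable (UNIV :: 'a set)"
  shows "\<exists>\<sigma>. Modules.additive \<sigma> \<and> (\<forall>y. \<sigma> y \<le> q y) \<and> \<sigma> w = q w"
proof -
  define xs where "xs = case_nat w (from_nat_into (UNIV :: 'a set))"
  have "z \<in> range xs" for z
    using rangeI[of xs "Suc (to_nat_on UNIV z)"] from_nat_into_to_nat_on[OF countable, of z]
    by (simp add: xs_def)
  then have surj: "surj xs" by blast
  define Q where "Q = straighten_seq q xs"
  define \<sigma> where "\<sigma> y = (INF n. Q n y)" for y
  have Q: "sublinear (Q n)" for n
    unfolding Q_def using sublinear_straighten_seq[OF q] .
  have bdd: "bdd_below (range (\<lambda>n. Q n y))" for y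
    unfolding Q_def bdd_below_def using straighten_seq_ge[OF q] by blast
  have le: "\<sigma> y \<le> Q n y" for y n
    unfolding \<sigma>_def by (rule cINF_lower[OF bdd]) simp
  have sub: "\<sigma> (a + b) \<le> \<sigma> a + \<sigma> b" for a b
    unfolding \<sigma>_def Q_def
    by (rule INF_add_le_of_antimono)
      (use sublinear_add[OF Q] straighten_seq_antimono[OF q] bdd in \<open>simp_all add: Q_def\<close>)
  have antisym_at: "\<sigma> (xs k) + \<sigma> (- xs k) \<le> 0" for k
    using le[of "xs k" k] le[of "- xs k" "Suc k"] straighten_minus_le[OF Q, of k "xs k"]
    by (simp add: Q_def)
  have add: "Modules.additive \<sigma>"
    by (rule additive_if_subadditive_antisym[OF sub]) (use antisym_at surj in \<open>metis surjD\<close>)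
  moreover have "\<sigma> y \<le> q y" for y
    using le[of y 0] by (simp add: Q_def)
  moreover have "q w \<le> \<sigma> w"
    using le[of "- w" 1] straighten_minus_le[OF q, of w] additive.minus[OF add, of w]
    by (simp add: Q_def xs_def)
  ultimately show ?thesis by (intro exI[of _ \<sigma>]) (simp add: order_antisym)
qed

lemma state_additive: "\<tau> \<in> states u \<Longrightarrow> Modules.additive \<tau>"
  by (simp add: states_def additive.intro)

lemma state_nonneg: "\<tau> \<in> states u \<Longrightarrow> 0 \<le> g \<Longrightarrow> 0 \<le> \<tau> g"
  by (simp add: states_def)

lemma state_unit: "\<tau> \<in> states u \<Longrightarrow> \<tau> u = 1"
  by (simp add: states_def)

lemma state_le_natmul_unit:
  assumes \<tau>: "\<tau> \<in> states u" and le: "g \<le> natmul n u"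
  shows "\<tau> g \<le> real n"
proof -
  have "0 \<le> \<tau> (natmul n u - g)" using state_nonneg[OF \<tau>] le by simp
  then show ?thesis
    by (simp add: additive.diff[OF state_additive[OF \<tau>]] additive_natmul[OF state_additive[OF \<tau>]]
        state_unit[OF \<tau>])
qed

lemma state_infinitesimal:
  assumes \<tau>: "\<tau> \<in> states u" and g: "g \<in> infinitesimals u"
  shows "\<tau> g = 0"
proof (rule ccontr)
  assume "\<tau> g \<noteq> 0"
  have bound: "real q * \<bar>\<tau> g\<bar> \<le> 1" if "0 < q" for q
  proof -
    have "- natmul 1 u \<le> natmul q g \<and> natmul q g \<le> natmul 1 u"
      using g that unfolding infinitesimals_def by blast
    then have "natmul q g \<le> natmul 1 u" "natmul q (- g) \<le> natmul 1 u"
      by (simp_all only: natmul_minus minus_le_iff)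
    then have "\<tau> (natmul q g) \<le> real 1" "\<tau> (natmul q (- g)) \<le> real 1"
      by (simp_all only: state_le_natmul_unit[OF \<tau>])
    then have "real q * \<tau> g \<le> 1" "- (real q * \<tau> g) \<le> 1"
      by (simp_all add: additive_natmul[OF state_additive[OF \<tau>]] additive.minus[OF state_additive[OF \<tau>]])
    then show ?thesis
      using that by (simp add: abs_if)
  qed
  obtain q :: nat where "1 / \<bar>\<tau> g\<bar> < real q"
    using reals_Archimedean2 by blast
  then have "1 < real q * \<bar>\<tau> g\<bar>"
    using \<open>\<tau> g \<noteq> 0\<close> by (simp add: divide_less_eq mult.commute)
  moreover from this have "0 < q" by (cases q) simp_all
  ultimately show False using bound by (meson not_le)
qed

locale unperforated_order_unit =
  fixes u :: "'a::ordered_ab_group_add"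
  assumes unperf: "unperforated TYPE('a)" and unit: "order_unit u" and unit_neq_0: "u \<noteq> 0"
begin

lemma nonneg_if_natmul_nonneg: "0 < n \<Longrightarrow> 0 \<le> natmul n g \<Longrightarrow> 0 \<le> (g::'a)"
  using unperf unfolding unperforated_def by blast

lemma le_natmul_unit: "\<exists>n. g \<le> natmul n u"
  using unit by (auto simp: order_unit_def)

lemma unit_nonneg: "0 \<le> u"
  using unit nonneg_if_natmul_nonneg by (auto simp: order_unit_def)

lemma natmul_unit_le_iff: "natmul m u \<le> natmul n u \<longleftrightarrow> m \<le> n"
proof
  assume le: "natmul m u \<le> natmul n u"
  show "m \<le> n"
  proof (rule ccontr)
    assume "\<not> m \<le> n"
    then have "0 < m - n" and "natmul m u = natmul (m - n) u + natmul n u"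
      by (simp_all add: natmul_add_nat[symmetric])
    with le have "0 \<le> natmul (m - n) (- u)"
      by (simp add: natmul_minus)
    then have "0 \<le> - u" by (rule nonneg_if_natmul_nonneg[OF \<open>0 < m - n\<close>])
    with unit_nonneg unit_neq_0 show False by simp
  qed
qed (rule natmul_mono_nat[OF unit_nonneg])

text \<open>The gauge of x is inf {r \<in> \<rat> : x \<le> r u}; the integer numerator of r = (k - j)/n is encoded
  by two natural numbers.\<close>
definition unit_gauge :: "'a \<Rightarrow> real" where
  "unit_gauge x = Inf {(real k - real j) / real n | n j k. 0 < n \<and> natmul n x + natmul j u \<le> natmul k u}"

lemma unit_gauge_le:
  assumes n: "0 < n" and le: "natmul n x + natmul j u \<le> natmul k u"
  shows "unit_gauge x \<le> (real k - real j) / real n"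
  unfolding unit_gauge_def
proof (rule cInf_lower)
  obtain m where m: "- x \<le> natmul m u" using le_natmul_unit by blast
  have "- real m \<le> (real k - real j) / real n"
    if n: "0 < n" and le: "natmul n x + natmul j u \<le> natmul k u" for n j k
  proof -
    have "natmul n (- x) \<le> natmul (n * m) u" using natmul_mono[OF m] by (simp add: natmul_mult)
    with le have "natmul n x + natmul j u + natmul n (- x) \<le> natmul k u + natmul (n * m) u"
      by (rule add_mono)
    then have "natmul j u \<le> natmul (k + n * m) u"
      by (simp add: natmul_minus natmul_add_nat)
    then have "real j \<le> real k + real n * real m"
      by (simp add: natmul_unit_le_iff flip: of_nat_mult of_nat_add)
    with n show ?thesis by (simp add: le_divide_eq algebra_simps)
  qed
  then show "bdd_below {(real k - real j) / real n | n j k. 0 < n \<and> natmul n x + natmul j u \<le> natmul k u}"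
    unfolding bdd_below_def by blast
qed (use assms in blast)

lemma unit_gauge_greatest:
  assumes "\<And>n j k. 0 < n \<Longrightarrow> natmul n x + natmul j u \<le> natmul k u \<Longrightarrow> c \<le> (real k - real j) / real n"
  shows "c \<le> unit_gauge x"
proof -
  obtain m where "x \<le> natmul m u" using le_natmul_unit by blast
  then have "natmul 1 x + natmul 0 u \<le> natmul m u" by simp
  then show ?thesis
    unfolding unit_gauge_def by (intro cInf_greatest) (use assms in blast)+
qed

lemma unit_gauge_less_imp:
  assumes "unit_gauge x < c"
  shows "\<exists>n j k. 0 < n \<and> natmul n x + natmul j u \<le> natmul k u \<and> (real k - real j) / real n < c"
proof (rule ccontr)
  assume "\<not> ?thesis"
  then have "c \<le> unit_gauge x" by (intro unit_gauge_greatest) (meson not_le)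
  with assms show False by simp
qed

lemma unit_gauge_add: "unit_gauge (x + y) \<le> unit_gauge x + unit_gauge y"
proof -
  have pair: "unit_gauge (x + y) \<le> (real k1 - real j1) / real n1 + (real k2 - real j2) / real n2"
    if n1: "0 < n1" and l1: "natmul n1 x + natmul j1 u \<le> natmul k1 u"
      and n2: "0 < n2" and l2: "natmul n2 y + natmul j2 u \<le> natmul k2 u" for n1 j1 k1 n2 j2 k2
  proof -
    have "natmul n2 (natmul n1 x + natmul j1 u) + natmul n1 (natmul n2 y + natmul j2 u)
        \<le> natmul n2 (natmul k1 u) + natmul n1 (natmul k2 u)"
      by (intro add_mono natmul_mono l1 l2)
    then have "natmul (n1 * n2) (x + y) + natmul (n2 * j1 + n1 * j2) u \<le> natmul (n2 * k1 + n1 * k2) u"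
      by (simp add: natmul_add natmul_add_nat natmul_mult[symmetric] algebra_simps)
    then have "unit_gauge (x + y) \<le> (real (n2 * k1 + n1 * k2) - real (n2 * j1 + n1 * j2)) / real (n1 * n2)"
      using n1 n2 by (intro unit_gauge_le) simp_all
    also have "\<dots> = (real k1 - real j1) / real n1 + (real k2 - real j2) / real n2"
      using n1 n2 by (simp add: field_simps)
    finally show ?thesis .
  qed
  have "unit_gauge (x + y) - (real k2 - real j2) / real n2 \<le> unit_gauge x"
    if "0 < n2" "natmul n2 y + natmul j2 u \<le> natmul k2 u" for n2 j2 k2
    using pair[OF _ _ that] by (intro unit_gauge_greatest) (simp add: algebra_simps)
  then have "unit_gauge (x + y) - unit_gauge x \<le> unit_gauge y"
    by (intro unit_gauge_greatest) (simp add: algebra_simps)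
  then show ?thesis by simp
qed

lemma unit_gauge_natmul: "unit_gauge (natmul m x) = real m * unit_gauge x"
proof (cases "m = 0")
  case True
  have "unit_gauge 0 \<le> 0" using unit_gauge_le[of 1 0 0 0] by simp
  moreover have "0 \<le> unit_gauge 0"
    by (rule unit_gauge_greatest) (simp add: natmul_unit_le_iff)
  ultimately show ?thesis using True by simp
next
  case False
  then have m: "0 < m" by simp
  have "real m * unit_gauge x \<le> unit_gauge (natmul m x)"
  proof (rule unit_gauge_greatest)
    fix n j k assume n: "0 < n" and le: "natmul n (natmul m x) + natmul j u \<le> natmul k u"
    have "unit_gauge x \<le> (real k - real j) / real (n * m)"
      using n m le by (intro unit_gauge_le) (simp_all add: natmul_mult)
    then show "real m * unit_gauge x \<le> (real k - real j) / real n"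
      using m n by (simp add: le_divide_eq field_simps)
  qed
  moreover have "unit_gauge (natmul m x) / real m \<le> unit_gauge x"
  proof (rule unit_gauge_greatest)
    fix n j k assume n: "0 < n" and le: "natmul n x + natmul j u \<le> natmul k u"
    have "natmul n (natmul m x) + natmul (m * j) u \<le> natmul (m * k) u"
      using natmul_mono[OF le, of m] by (simp add: natmul_add natmul_mult natmul_commute[of m n])
    then have "unit_gauge (natmul m x) \<le> (real (m * k) - real (m * j)) / real n"
      using n by (intro unit_gauge_le) simp_all
    then show "unit_gauge (natmul m x) / real m \<le> (real k - real j) / real n"
      using m n by (simp add: divide_le_eq field_simps)
  qed
  ultimately show ?thesis using m by (simp add: divide_le_eq mult.commute)
qed

lemma sublinear_unit_gauge: "sublinear unit_gauge"
  by (simp add: sublinear_def unit_gauge_add unit_gauge_natmul)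

lemma state_if_dominated_by_unit_gauge:
  assumes add: "Modules.additive \<sigma>" and dom: "\<And>y. \<sigma> y \<le> unit_gauge y"
  shows "\<sigma> \<in> states u"
proof -
  have "\<sigma> u \<le> 1" using dom[of u] unit_gauge_le[of 1 u 0 1] by simp
  moreover have "\<sigma> (- u) \<le> - 1" using dom[of "- u"] unit_gauge_le[of 1 "- u" 1 0] by simp
  moreover have "0 \<le> \<sigma> g" if "0 \<le> g" for g
    using dom[of "- g"] unit_gauge_le[of 1 "- g" 0 0] that additive.minus[OF add, of g] by simp
  ultimately show ?thesis
    using additive.add[OF add] additive.minus[OF add, of u] by (simp add: states_def)
qed

lemma natmul_le_if_unit_gauge_less:
  assumes p: "0 < p" and q: "0 < q" and less: "unit_gauge g < real p / real q"
  shows "natmul q g \<le> natmul p u"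
proof -
  obtain n j k where n: "0 < n" and le: "natmul n g + natmul j u \<le> natmul k u"
    and "(real k - real j) / real n < real p / real q"
    using unit_gauge_less_imp[OF less] by blast
  then have "real (q * k) < real (p * n + q * j)"
    using q by (simp add: divide_less_eq less_divide_eq field_simps)
  then have le_nat: "q * k \<le> p * n + q * j" by linarith
  have "natmul (q * n) g + natmul (q * j) u \<le> natmul (q * k) u"
    using natmul_mono[OF le, of q] by (simp add: natmul_add natmul_mult)
  also have "\<dots> \<le> natmul (p * n) u + natmul (q * j) u"
    using natmul_mono_nat[OF unit_nonneg le_nat] by (simp add: natmul_add_nat)
  finally have "0 \<le> natmul n (natmul p u - natmul q g)"
    by (simp add: natmul_diff natmul_mult natmul_commute[of _ n])
  then have "0 \<le> natmul p u - natmul q g" by (rule nonneg_if_natmul_nonneg[OF n])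
  then show ?thesis by simp
qed

lemma exists_state_neq_0:
  assumes countable: "countable (UNIV :: 'a set)" and g: "g \<notin> infinitesimals u"
  shows "\<exists>\<sigma>\<in>states u. \<sigma> g \<noteq> 0"
proof -
  obtain p q :: nat where p: "0 < p" and q: "0 < q"
    and not_bounded: "\<not> (- natmul p u \<le> natmul q g \<and> natmul q g \<le> natmul p u)"
    using g unfolding infinitesimals_def by blast
  have "natmul q (- g) \<le> natmul p u \<longleftrightarrow> - natmul p u \<le> natmul q g"
    by (simp only: natmul_minus minus_le_iff)
  with not_bounded have "\<not> natmul q g \<le> natmul p u \<or> \<not> natmul q (- g) \<le> natmul p u"
    by blast
  then obtain w where w: "w = g \<or> w = - g" and "\<not> natmul q w \<le> natmul p u"
    by blast
  then have "real p / real q \<le> unit_gauge w"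
    using natmul_le_if_unit_gauge_less[OF p q, of w] by (meson not_less)
  moreover have "0 < real p / real q" using p q by simp
  ultimately have "0 < unit_gauge w" by linarith
  obtain \<sigma> where add: "Modules.additive \<sigma>" and dom: "\<forall>y. \<sigma> y \<le> unit_gauge y" and "\<sigma> w = unit_gauge w"
    using countable_sublinear_extension[OF sublinear_unit_gauge countable] by blast
  with \<open>0 < unit_gauge w\<close> w have "\<sigma> g \<noteq> 0"
    using additive.minus[OF add, of g] by auto
  with state_if_dominated_by_unit_gauge[OF add] dom show ?thesis by blast
qed

end

lemma closed_states: "closed (states u)"
  unfolding states_def
  by (intro closed_Collect_conj closed_Collect_all closed_Collect_imp closed_Collect_eq closed_Collect_le
      open_Collect_const continuous_intros continuous_on_product_coordinates)

lemma compact_states: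
  assumes "order_unit u"
  shows "compact (states u)"
proof -
  obtain N where N: "\<And>g. g \<le> natmul (N g) u"
    using assms unfolding order_unit_def by (metis diff_ge_0_iff_ge)
  define K where "K = PiE UNIV (\<lambda>g. {- real (N (- g)) .. real (N g)})"
  have "compactin (powertop_real UNIV) K"
    unfolding K_def by (simp add: compactin_PiE)
  then have "compact K" by (simp add: euclidean_product_topology)
  moreover have "states u \<subseteq> K"
  proof
    fix \<tau> assume \<tau>: "\<tau> \<in> states u"
    have "\<tau> g \<le> real (N g)" "- \<tau> g \<le> real (N (- g))" for g
      using state_le_natmul_unit[OF \<tau> N] additive.minus[OF state_additive[OF \<tau>]] by metis+
    then have "\<tau> g \<in> {- real (N (- g)) .. real (N g)}" for g
      by (metis atLeastAtMost_iff minus_le_iff)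
    then show "\<tau> \<in> K" by (simp add: K_def PiE_iff)
  qed
  ultimately show ?thesis
    using compact_Int_closed[OF _ closed_states] by (metis inf.absorb_iff2)
qed

lemma convex_comb_in_states:
  assumes "\<tau> \<in> states u" and "\<sigma> \<in> states u" and "0 \<le> t" "t \<le> 1"
  shows "(\<lambda>h. (1 - t) * \<tau> h + t * \<sigma> h) \<in> states u"
proof -
  have "0 \<le> (1 - t) * \<tau> g + t * \<sigma> g" if "0 \<le> g" for g
    using assms that by (simp add: states_def)
  with assms show ?thesis by (simp add: states_def distrib_left add_ac)
qed

lemma states_subset_closure_neq_0:
  assumes \<sigma>: "\<sigma> \<in> states u" and \<sigma>g: "\<sigma> g \<noteq> 0"
  shows "states u \<subseteq> closure {\<tau> \<in> states u. \<tau> g \<noteq> 0}"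
proof
  fix \<tau> assume \<tau>: "\<tau> \<in> states u"
  show "\<tau> \<in> closure {\<tau> \<in> states u. \<tau> g \<noteq> 0}"
  proof (cases "\<tau> g = 0")
    case False
    with \<tau> show ?thesis by (simp add: closure_def)
  next
    case True
    define \<gamma> where "\<gamma> t = (\<lambda>h. (1 - t) * \<tau> h + t * \<sigma> h)" for t :: real
    have "continuous_on UNIV \<gamma>"
      unfolding \<gamma>_def by (intro continuous_on_coordinatewise_then_product continuous_intros)
    then have "continuous (at_right 0) \<gamma>"
      by (simp add: continuous_on_eq_continuous_at continuous_at_imp_continuous_at_within)
    then have "(\<gamma> \<longlongrightarrow> \<tau>) (at_right 0)"
      by (simp add: continuous_within \<gamma>_def)
    moreover have "eventually (\<lambda>t. \<gamma> t \<in> closure {\<tau> \<in> states u. \<tau> g \<noteq> 0}) (at_right 0)"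
    proof (rule eventually_mono[OF eventually_at_right_real[of 0 1]])
      fix t :: real assume "t \<in> {0<..<1}"
      then have "\<gamma> t \<in> {\<tau> \<in> states u. \<tau> g \<noteq> 0}"
        using convex_comb_in_states[OF \<tau> \<sigma>, of t] \<sigma>g True by (simp add: \<gamma>_def)
      then show "\<gamma> t \<in> closure {\<tau> \<in> states u. \<tau> g \<noteq> 0}"
        using closure_subset by (rule subsetD[rotated])
    qed simp
    ultimately show ?thesis
      using Lim_in_closed_set[OF closed_closure] trivial_limit_at_right_real by blast
  qed
qed

theorem mainTheorem9:
  fixes u :: "'a::ordered_ab_group_add"
  assumes "countable (UNIV :: 'a set)"
    and "unperforated TYPE('a)"
    and "order_unit u"
  defines "X \<equiv> subtopology (powertop_real (UNIV :: 'a set)) (states u)"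
    and "D \<equiv> {\<tau> \<in> states u. {g. \<tau> g = 0} = infinitesimals u}"
  shows "gdelta_in X D \<and> X closure_of D = topspace X"
proof (cases "u = 0")
  case True
  then have "states u = {}"
    using additive.zero[OF state_additive] state_unit by fastforce
  then show ?thesis by (simp add: X_def D_def)
next
  case False
  interpret unperforated_order_unit u
    using assms(2,3) False by unfold_locales
  have X: "X = top_of_set (states u)"
    by (simp add: X_def euclidean_product_topology)
  define \<U> where "\<U> = insert (states u) ((\<lambda>g. {\<tau> \<in> states u. \<tau> g \<noteq> 0}) ` (- infinitesimals u))"
  have D: "D = \<Inter>\<U>"
    using state_infinitesimal by (auto simp: D_def \<U>_def)
  have countable: "countable \<U>"
    using countable_subset[OF _ assms(1)] by (simp add: \<U>_def)
  have open_dense: "openin X V \<and> X closure_of V = topspace X" if "V \<in> \<U>" for V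
  proof -
    have "open {\<tau>::'a \<Rightarrow> real. \<tau> g \<noteq> 0}" for g
      by (intro open_Collect_neq continuous_on_product_coordinates continuous_on_const)
    then have "openin X {\<tau> \<in> states u. \<tau> g \<noteq> 0}" for g
      unfolding X using openin_open_Int by (metis Collect_conj_eq Collect_mem_eq)
    moreover have "X closure_of {\<tau> \<in> states u. \<tau> g \<noteq> 0} = topspace X"
      if g: "g \<notin> infinitesimals u" for g
    proof -
      obtain \<sigma> where "\<sigma> \<in> states u" "\<sigma> g \<noteq> 0"
        using exists_state_neq_0[OF assms(1) g] by blast
      from states_subset_closure_neq_0[OF this] show ?thesis
        by (auto simp: X closure_of_subtopology Int_absorb1)
    qed
    ultimately show ?thesis
      using that closure_of_topspace[of X] by (auto simp: \<U>_def X)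
  qed
  have "compact_space X"
    unfolding X using compact_states[OF assms(3)] by (simp add: compact_space_subtopology)
  moreover have "Hausdorff_space X"
    unfolding X_def by (simp add: Hausdorff_space_subtopology Hausdorff_space_product_topology)
  ultimately have "X closure_of \<Inter>\<U> = topspace X"
    by (intro Baire_category[OF _ countable open_dense])
      (simp add: compact_imp_locally_compact_space compact_Hausdorff_imp_regular_space)
  moreover have "gdelta_in X (\<Inter>\<U>)"
    using countable open_dense by (intro gdelta_in_Inter open_imp_gdelta_in) (auto simp: \<U>_def)
  ultimately show ?thesis
    by (simp add: D)
qed

end
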